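(* Let $(X_t)_{t\in T}$ be a real stochastic process indexed by a set $T$, let $k_1\geq 2$ be an integer, and let $(T_k)_{0\leq k\leq k_1}$ be subsets of $T$ with $|T_k|\leq e^{2^{k+1}}$ for $0\leq k\leq k_1$ and $T_{k_1}=T$. Let $\pi_k\colon T\to T_k$, $0\leq k\leq k_1$, be maps with $\pi_{k_1}(t)=t$ for all $t\in T$. Then for every integer $1\leq k_0\leq k_1-1$ and every $p$ with $2^{k_0-1}\leq p\leq 2^{k_0}$, \[ \Big\|\sup_{t\in T}|X_t|\Big\|_p\leq 3e^3\Big(\sup_{t\in T}\sum_{k=k_0+1}^{k_1}\|X_{\pi_k(t)}-X_{\pi_{k-1}(t)}\|_{2^k}+\sup_{t\in T_{k_0}}\|X_t\|_p\Big). \]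
   Context: $\|Y\|_p:=(\mathbb{E}|Y|^p)^{1/p}$ for a real random variable $Y$; $|T_k|$ is the cardinality (so $T$ is finite). *)

theory Defs
  imports "HOL-Probability.Probability"
begin

definition lpnorm :: "'a measure \<Rightarrow> real \<Rightarrow> ('a \<Rightarrow> real) \<Rightarrow> ennreal" where
  "lpnorm M p Y =
     (let I = (\<integral>\<^sup>+ x. ennreal (\<bar>Y x\<bar> powr p) \<partial>M)
      in if I = \<infinity> then \<infinity> else ennreal (enn2real I powr (1 / p)))"

end

theory Submission
  imports Defs
begin

text \<open>Along the chain \<open>\<pi>_k0 t, \<dots>, \<pi>_k1 t = t\<close> each increment \<open>X(\<pi>_k t) - X(\<pi>_(k-1) t)\<close>
  is at most its \<open>2^k\<close>-norm times \<open>Z\<close>, the maximum over the at most \<open>e^(3\<cdot>2^k)\<close> links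
  \<open>(u, v) \<in> T_k \<times> T_(k-1)\<close> of \<open>|X_u - X_v|\<close> divided by its \<open>2^k\<close>-norm. Hence
  \<open>sup_t |X_t| \<le> U + A Z\<close> almost surely, with \<open>U\<close> the maximum of \<open>|X_s|\<close> over \<open>T_k0\<close> and \<open>A\<close>
  the first supremum of the claim. A union bound gives
  \<open>\<parallel>U\<parallel>_p \<le> |T_k0|^(1/p) max_s \<parallel>X_s\<parallel>_p \<le> e^4 max_s \<parallel>X_s\<parallel>_p\<close>. For \<open>Z\<close>, cutting at
  \<open>d = 2e^3\<close> gives \<open>z^p \<le> d^p + d^(p-q) z^q\<close> for \<open>q = 2^k \<ge> p\<close>, whence
  \<open>E Z^p \<le> e^(3p) (2^p + \<Sum>_k 2^(p-2^k)) \<le> e^(3p) (2^p + 1) \<le> (3e^3)^p\<close>, using \<open>p \<le> 2^k0\<close>.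
  Minkowski's inequality combines the two bounds.\<close>

lemma powr_add_le_weighted:
  fixes u v l p :: real
  assumes "u \<ge> 0" "v \<ge> 0" "0 < l" "l < 1" "p \<ge> 1"
  shows "(u + v) powr p \<le> l powr (1 - p) * u powr p + (1 - l) powr (1 - p) * v powr p"
proof (cases "u = 0 \<or> v = 0")
  case True
  have "l powr (1 - p) \<ge> 1" "(1 - l) powr (1 - p) \<ge> 1"
    using assms powr_mono'[of "1 - p" 0 l] powr_mono'[of "1 - p" 0 "1 - l"] by auto
  then show ?thesis
    using True by (auto simp: mult_le_cancel_right1)
next
  case False
  with assms have "u / l > 0" "v / (1 - l) > 0" by auto
  then have "(l * (u / l) + (1 - l) * (v / (1 - l))) powr p
      \<le> l * (u / l) powr p + (1 - l) * (v / (1 - l)) powr p"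
    using convex_onD[OF powr_convex[OF \<open>p \<ge> 1\<close>], of "1 - l" "u / l" "v / (1 - l)"] assms
    by simp
  then show ?thesis
    using assms by (simp add: powr_divide powr_diff)
qed

lemma sum_atLeastSuc_atMost_diff:
  fixes f :: "nat \<Rightarrow> 'a::ab_group_add"
  assumes "m \<le> n"
  shows "(\<Sum>k\<in>{m+1..n}. f k - f (k - 1)) = f n - f m"
  using assms by (induction n rule: dec_induct) (auto simp: atLeastAtMostSuc_conv)

lemma sum_half_power_le_1: "(\<Sum>k\<in>{m+1..n}. (1/2::real) ^ (k - m)) \<le> 1"
proof (cases "m \<le> n")
  case True
  have "(\<Sum>k\<in>{m+1..n}. (1/2::real) ^ (k - m)) = 1 - (1/2) ^ (n - m)"
    using True by (induction n rule: dec_induct) (auto simp: atLeastAtMostSuc_conv Suc_diff_le)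
  then show ?thesis by simp
qed simp

lemma two_power_ge_add: "m \<le> n \<Longrightarrow> (2::nat) ^ m + (n - m) \<le> 2 ^ n"
proof (induction n rule: dec_induct)
  case (step n)
  have "1 \<le> (2::nat) ^ n" by simp
  with step show ?case by (simp only: Suc_diff_le power_Suc)
qed simp

lemma sum_two_powr_le_1:
  fixes p :: real
  assumes "p \<le> 2 ^ m"
  shows "(\<Sum>k\<in>{m+1..n}. 2 powr (p - 2 ^ k)) \<le> 1"
proof -
  have "2 powr (p - 2 ^ k) \<le> (1/2) ^ (k - m)" if "k \<in> {m+1..n}" for k
  proof -
    have "real (2 ^ m + (k - m)) \<le> real (2 ^ k)"
      using two_power_ge_add[of m k] that by (intro of_nat_mono) simp
    then have "p - 2 ^ k \<le> - real (k - m)" using assms by simp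
    then have "2 powr (p - 2 ^ k) \<le> 2 powr (- real (k - m))" by simp
    also have "\<dots> = (1/2) ^ (k - m)"
      by (simp add: powr_minus powr_realpow power_one_over inverse_eq_divide)
    finally show ?thesis .
  qed
  then have "(\<Sum>k\<in>{m+1..n}. 2 powr (p - 2 ^ k)) \<le> (\<Sum>k\<in>{m+1..n}. (1/2) ^ (k - m))"
    by (rule sum_mono)
  also have "\<dots> \<le> 1" by (rule sum_half_power_le_1)
  finally show ?thesis .
qed

lemma two_powr_plus_one_le_three_powr:
  fixes p :: real
  assumes "p \<ge> 1"
  shows "2 powr p + 1 \<le> 3 powr p"
proof -
  have "2 powr (p - 1) \<le> 3 powr (p - 1)" "1 \<le> 2 powr (p - 1)"
    using assms by (auto intro: powr_mono2 ge_one_powr_ge_zero)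
  then show ?thesis by (simp add: powr_diff)
qed

lemma powr_le_threshold:
  fixes z p q d :: real
  assumes "z \<ge> 0" "0 < p" "p \<le> q" "d > 0"
  shows "z powr p \<le> d powr p + d powr (p - q) * z powr q"
proof (cases "z \<le> d")
  case True
  then have "z powr p \<le> d powr p" using assms by (intro powr_mono2) auto
  then show ?thesis by (simp add: add_increasing2)
next
  case False
  then have "z powr p = z powr (p - q) * z powr q" using assms by (simp flip: powr_add)
  also have "\<dots> \<le> d powr (p - q) * z powr q"
    using False assms by (intro mult_right_mono powr_mono2') auto
  finally show ?thesis by (simp add: add_increasing)
qed

section \<open>Moments and the \<open>L\<^sup>p\<close> norm\<close>

lemma lpnorm_le_iff:
  assumes "q > 0" "C \<ge> 0"
  shows "lpnorm M q Y \<le> ennreal C \<longleftrightarrow>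
    (\<integral>\<^sup>+x. ennreal (\<bar>Y x\<bar> powr q) \<partial>M) \<le> ennreal (C powr q)"
proof -
  define I where "I = (\<integral>\<^sup>+x. ennreal (\<bar>Y x\<bar> powr q) \<partial>M)"
  have "lpnorm M q Y \<le> ennreal C \<longleftrightarrow> I \<noteq> \<infinity> \<and> enn2real I powr (1 / q) \<le> C"
    using assms by (auto simp: lpnorm_def I_def[symmetric] Let_def ennreal_le_iff top_unique)
  also have "\<dots> \<longleftrightarrow> I \<noteq> \<infinity> \<and> enn2real I \<le> C powr q"
    using assms powr_mono2[of q "enn2real I powr (1 / q)" C] powr_mono2[of "1 / q" "enn2real I" "C powr q"]
    by (auto simp: powr_powr)
  also have "\<dots> \<longleftrightarrow> I \<le> ennreal (C powr q)"
    by (cases I) (auto simp: ennreal_le_iff top_unique)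
  finally show ?thesis unfolding I_def .
qed

lemma AE_eq_0_if_nn_integral_powr_le_0:
  fixes f :: "'a \<Rightarrow> real"
  assumes "f \<in> borel_measurable M" "p > 0" "(\<integral>\<^sup>+x. ennreal (\<bar>f x\<bar> powr p) \<partial>M) \<le> 0"
  shows "AE x in M. f x = 0"
proof -
  have "AE x in M. ennreal (\<bar>f x\<bar> powr p) = 0"
    using assms by (subst nn_integral_0_iff_AE[symmetric]) auto
  then show ?thesis by eventually_elim simp
qed

lemma nn_integral_powr_add_le:
  fixes f g :: "'a \<Rightarrow> real"
  assumes f: "f \<in> borel_measurable M" "\<And>x. f x \<ge> 0"
    and g: "g \<in> borel_measurable M" "\<And>x. g x \<ge> 0"
    and "p \<ge> 1" "a \<ge> 0" "b \<ge> 0"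
    and fa: "(\<integral>\<^sup>+x. ennreal (f x powr p) \<partial>M) \<le> ennreal (a powr p)"
    and gb: "(\<integral>\<^sup>+x. ennreal (g x powr p) \<partial>M) \<le> ennreal (b powr p)"
  shows "(\<integral>\<^sup>+x. ennreal ((f x + g x) powr p) \<partial>M) \<le> ennreal ((a + b) powr p)"
proof (cases "a = 0 \<or> b = 0")
  case True
  then consider "a = 0" "AE x in M. f x = 0" | "b = 0" "AE x in M. g x = 0"
    using AE_eq_0_if_nn_integral_powr_le_0[of f M p] AE_eq_0_if_nn_integral_powr_le_0[of g M p]
      f g fa gb \<open>p \<ge> 1\<close> by fastforce
  then show ?thesis
  proof cases
    case 1
    then have "(\<integral>\<^sup>+x. ennreal ((f x + g x) powr p) \<partial>M) = (\<integral>\<^sup>+x. ennreal (g x powr p) \<partial>M)"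
      by (intro nn_integral_cong_AE) auto
    with 1 gb show ?thesis by simp
  next
    case 2
    then have "(\<integral>\<^sup>+x. ennreal ((f x + g x) powr p) \<partial>M) = (\<integral>\<^sup>+x. ennreal (f x powr p) \<partial>M)"
      by (intro nn_integral_cong_AE) auto
    with 2 fa show ?thesis by simp
  qed
next
  case False
  with assms have ab: "a > 0" "b > 0" by auto
  define l where "l = a / (a + b)"
  have l: "0 < l" "l < 1" "1 - l = b / (a + b)"
    using ab by (auto simp: l_def field_simps)
  \<comment> \<open>With the weight \<open>l = a / (a + b)\<close> the two terms of the convexity bound add up to \<open>(a + b) powr p\<close>.\<close>
  have weight: "(c / (a + b)) powr (1 - p) * c powr p = c / (a + b) * (a + b) powr p" if "c > 0" for c
  proof -
    have "(c / (a + b)) powr (1 - p) * c powr p = c powr (1 - p) * c powr p / (a + b) powr (1 - p)"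
      by (simp add: powr_divide)
    also have "\<dots> = c / (a + b) * (a + b) powr p"
      using that ab by (simp add: powr_diff flip: powr_add)
    finally show ?thesis .
  qed
  have "(\<integral>\<^sup>+x. ennreal ((f x + g x) powr p) \<partial>M)
      \<le> (\<integral>\<^sup>+x. ennreal (l powr (1 - p)) * ennreal (f x powr p)
                  + ennreal ((1 - l) powr (1 - p)) * ennreal (g x powr p) \<partial>M)"
    using powr_add_le_weighted[OF f(2) g(2) l(1,2) \<open>p \<ge> 1\<close>]
    by (intro nn_integral_mono) (simp flip: ennreal_mult ennreal_plus del: ennreal_plus)
  also have "\<dots> = ennreal (l powr (1 - p)) * (\<integral>\<^sup>+x. ennreal (f x powr p) \<partial>M)
                 + ennreal ((1 - l) powr (1 - p)) * (\<integral>\<^sup>+x. ennreal (g x powr p) \<partial>M)"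
    using f g by (simp add: nn_integral_add nn_integral_cmult)
  also have "\<dots> \<le> ennreal (l powr (1 - p)) * ennreal (a powr p) + ennreal ((1 - l) powr (1 - p)) * ennreal (b powr p)"
    by (intro add_mono mult_left_mono fa gb) auto
  also have "\<dots> = ennreal (l powr (1 - p) * a powr p + (1 - l) powr (1 - p) * b powr p)"
    by (simp flip: ennreal_mult ennreal_plus del: ennreal_plus)
  also have "l powr (1 - p) * a powr p + (1 - l) powr (1 - p) * b powr p
      = a / (a + b) * (a + b) powr p + b / (a + b) * (a + b) powr p"
    using weight[of a] weight[of b] ab by (simp only: l(3)) (simp add: l_def)
  also have "\<dots> = (a + b) powr p"
    using ab by (simp flip: distrib_right add_divide_distrib)
  finally show ?thesis .
qed

lemma nn_integral_Max_powr_le_sum: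
  fixes Y :: "'i \<Rightarrow> 'a \<Rightarrow> real"
  assumes "finite S" "S \<noteq> {}" "\<And>s. s \<in> S \<Longrightarrow> Y s \<in> borel_measurable M"
  shows "(\<integral>\<^sup>+x. ennreal (Max ((\<lambda>s. \<bar>Y s x\<bar>) ` S) powr p) \<partial>M)
    \<le> (\<Sum>s\<in>S. \<integral>\<^sup>+x. ennreal (\<bar>Y s x\<bar> powr p) \<partial>M)"
proof -
  have "ennreal (Max ((\<lambda>s. \<bar>Y s x\<bar>) ` S) powr p) \<le> (\<Sum>s\<in>S. ennreal (\<bar>Y s x\<bar> powr p))" for x
  proof -
    have "Max ((\<lambda>s. \<bar>Y s x\<bar>) ` S) \<in> (\<lambda>s. \<bar>Y s x\<bar>) ` S"
      using assms by (intro Max_in) auto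
    then obtain s where "s \<in> S" "Max ((\<lambda>s. \<bar>Y s x\<bar>) ` S) = \<bar>Y s x\<bar>" by blast
    then have "Max ((\<lambda>s. \<bar>Y s x\<bar>) ` S) powr p \<le> (\<Sum>s\<in>S. \<bar>Y s x\<bar> powr p)"
      using assms by (auto intro: member_le_sum)
    then show ?thesis
      by (simp add: ennreal_leI)
  qed
  then have "(\<integral>\<^sup>+x. ennreal (Max ((\<lambda>s. \<bar>Y s x\<bar>) ` S) powr p) \<partial>M)
      \<le> (\<integral>\<^sup>+x. (\<Sum>s\<in>S. ennreal (\<bar>Y s x\<bar> powr p)) \<partial>M)"
    by (rule nn_integral_mono)
  also have "\<dots> = (\<Sum>s\<in>S. \<integral>\<^sup>+x. ennreal (\<bar>Y s x\<bar> powr p) \<partial>M)"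
    using assms by (intro nn_integral_sum) auto
  finally show ?thesis .
qed

lemma (in prob_space) nn_integral_Max_powr_le_threshold:
  fixes R :: "'i \<Rightarrow> 'a \<Rightarrow> real" and q :: "'i \<Rightarrow> real"
  assumes "finite I" "I \<noteq> {}"
    and R: "\<And>i. i \<in> I \<Longrightarrow> R i \<in> borel_measurable M" "\<And>i x. i \<in> I \<Longrightarrow> R i x \<ge> 0"
    and moment: "\<And>i. i \<in> I \<Longrightarrow> (\<integral>\<^sup>+x. ennreal (R i x powr q i) \<partial>M) \<le> 1"
    and "0 < p" "\<And>i. i \<in> I \<Longrightarrow> p \<le> q i" "d > 0"
  shows "(\<integral>\<^sup>+x. ennreal (Max ((\<lambda>i. R i x) ` I) powr p) \<partial>M)
    \<le> ennreal (d powr p + (\<Sum>i\<in>I. d powr (p - q i)))"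
proof -
  have "ennreal (Max ((\<lambda>i. R i x) ` I) powr p)
      \<le> ennreal (d powr p) + (\<Sum>i\<in>I. ennreal (d powr (p - q i)) * ennreal (R i x powr q i))" for x
  proof -
    have "Max ((\<lambda>i. R i x) ` I) \<in> (\<lambda>i. R i x) ` I"
      using assms by (intro Max_in) auto
    then obtain i where i: "i \<in> I" "Max ((\<lambda>i. R i x) ` I) = R i x" by blast
    have "R i x powr p \<le> d powr p + d powr (p - q i) * R i x powr q i"
      using i assms by (intro powr_le_threshold) auto
    also have "\<dots> \<le> d powr p + (\<Sum>i\<in>I. d powr (p - q i) * R i x powr q i)"
      using i assms by (intro add_left_mono member_le_sum) auto
    finally have "ennreal (Max ((\<lambda>i. R i x) ` I) powr p)
        \<le> ennreal (d powr p + (\<Sum>i\<in>I. d powr (p - q i) * R i x powr q i))"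
      using i by (intro ennreal_leI) simp
    then show ?thesis
      by (simp add: sum_nonneg flip: ennreal_mult)
  qed
  then have "(\<integral>\<^sup>+x. ennreal (Max ((\<lambda>i. R i x) ` I) powr p) \<partial>M)
      \<le> (\<integral>\<^sup>+x. ennreal (d powr p) + (\<Sum>i\<in>I. ennreal (d powr (p - q i)) * ennreal (R i x powr q i)) \<partial>M)"
    by (rule nn_integral_mono)
  also have "\<dots> = ennreal (d powr p)
      + (\<Sum>i\<in>I. ennreal (d powr (p - q i)) * (\<integral>\<^sup>+x. ennreal (R i x powr q i) \<partial>M))"
    using R by (simp add: nn_integral_add nn_integral_sum nn_integral_cmult emeasure_space_1)
  also have "\<dots> \<le> ennreal (d powr p) + (\<Sum>i\<in>I. ennreal (d powr (p - q i)))"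
    using moment by (intro add_left_mono sum_mono) (auto intro: mult_left_le)
  also have "\<dots> = ennreal (d powr p + (\<Sum>i\<in>I. d powr (p - q i)))"
    by (simp add: sum_nonneg)
  finally show ?thesis .
qed

lemma nn_integral_normalized_powr_le_1:
  assumes "q > 0" "D \<in> borel_measurable M"
  shows "(\<integral>\<^sup>+x. ennreal ((\<bar>D x\<bar> / enn2real (lpnorm M q D)) powr q) \<partial>M) \<le> 1"
proof (cases "enn2real (lpnorm M q D) = 0")
  case False
  define a where "a = enn2real (lpnorm M q D)"
  have "a > 0" using False by (simp add: a_def less_le)
  moreover have "lpnorm M q D \<le> ennreal a"
    using False by (cases "lpnorm M q D") (simp_all add: a_def)
  ultimately have moment: "(\<integral>\<^sup>+x. ennreal (\<bar>D x\<bar> powr q) \<partial>M) \<le> ennreal (a powr q)"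
    using lpnorm_le_iff[of q a M D] \<open>q > 0\<close> by simp
  have "(\<integral>\<^sup>+x. ennreal ((\<bar>D x\<bar> / a) powr q) \<partial>M)
      = (\<integral>\<^sup>+x. ennreal (\<bar>D x\<bar> powr q) * ennreal (1 / a powr q) \<partial>M)"
    by (simp add: powr_divide flip: ennreal_mult)
  also have "\<dots> = (\<integral>\<^sup>+x. ennreal (\<bar>D x\<bar> powr q) \<partial>M) * ennreal (1 / a powr q)"
    using assms by (simp add: nn_integral_multc)
  also have "\<dots> \<le> ennreal (a powr q) * ennreal (1 / a powr q)"
    using moment by (rule mult_right_mono) simp
  also have "\<dots> = 1"
    using \<open>a > 0\<close> by (simp flip: ennreal_mult)
  finally show ?thesis by (simp add: a_def)
qed simp

text \<open>The normalisation divides by zero when the norm vanishes, so the bound holds only almost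
  everywhere.\<close>
lemma AE_abs_le_lpnorm_mult_normalized:
  assumes "q > 0" "D \<in> borel_measurable M" "lpnorm M q D \<noteq> \<infinity>"
  shows "AE x in M. \<bar>D x\<bar> \<le> enn2real (lpnorm M q D) * (\<bar>D x\<bar> / enn2real (lpnorm M q D))"
proof (cases "enn2real (lpnorm M q D) = 0")
  case True
  then have "lpnorm M q D \<le> ennreal 0"
    using assms(3) by (simp add: enn2real_eq_0_iff)
  then have "(\<integral>\<^sup>+x. ennreal (\<bar>D x\<bar> powr q) \<partial>M) \<le> ennreal (0 powr q)"
    by (simp only: lpnorm_le_iff[OF assms(1) order.refl])
  then have "AE x in M. D x = 0"
    using assms by (intro AE_eq_0_if_nn_integral_powr_le_0[of D M q]) auto
  then show ?thesis by eventually_elim simp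
qed simp

section \<open>Chaining\<close>

locale chaining = prob_space M
  for M :: "'a measure" and X :: "'i \<Rightarrow> 'a \<Rightarrow> real" and T :: "'i set"
    and Ts :: "nat \<Rightarrow> 'i set" and \<pi> :: "nat \<Rightarrow> 'i \<Rightarrow> 'i" and k1 :: nat +
  assumes measurable_X: "t \<in> T \<Longrightarrow> X t \<in> borel_measurable M"
    and finite_T: "finite T"
    and Ts_subset: "k \<le> k1 \<Longrightarrow> Ts k \<subseteq> T"
    and card_Ts: "k \<le> k1 \<Longrightarrow> real (card (Ts k)) \<le> exp (2 ^ (k + 1))"
    and \<pi>_in_Ts: "k \<le> k1 \<Longrightarrow> t \<in> T \<Longrightarrow> \<pi> k t \<in> Ts k"
    and \<pi>_top: "t \<in> T \<Longrightarrow> \<pi> k1 t = t"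
    and T_nonempty: "T \<noteq> {}"
begin

lemma finite_Ts: "k \<le> k1 \<Longrightarrow> finite (Ts k)"
  using Ts_subset finite_T by (rule finite_subset)

lemma Ts_nonempty: "k \<le> k1 \<Longrightarrow> Ts k \<noteq> {}"
  using \<pi>_in_Ts T_nonempty by blast

lemma measurable_X_Ts: "k \<le> k1 \<Longrightarrow> s \<in> Ts k \<Longrightarrow> X s \<in> borel_measurable M"
  using Ts_subset measurable_X by blast

text \<open>A link \<open>(k, u, v)\<close> is a possible step of a chain from level \<open>k - 1\<close> to level \<open>k\<close>.\<close>
definition links :: "nat \<Rightarrow> (nat \<times> 'i \<times> 'i) set" where
  "links k0 = (SIGMA k:{k0+1..k1}. Ts k \<times> Ts (k - 1))"

definition normalized_link :: "nat \<times> 'i \<times> 'i \<Rightarrow> 'a \<Rightarrow> real" where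
  "normalized_link = (\<lambda>(k, u, v) x.
     \<bar>X u x - X v x\<bar> / enn2real (lpnorm M (2 ^ k) (\<lambda>x. X u x - X v x)))"

definition max_normalized_link :: "nat \<Rightarrow> 'a \<Rightarrow> real" where
  "max_normalized_link k0 x = Max ((\<lambda>l. normalized_link l x) ` links k0)"

definition max_level :: "nat \<Rightarrow> 'a \<Rightarrow> real" where
  "max_level k x = Max ((\<lambda>s. \<bar>X s x\<bar>) ` Ts k)"

lemma finite_links: "finite (links k0)"
  unfolding links_def by (auto intro!: finite_SigmaI finite_Ts)

lemma chain_link_in_links:
  assumes "k \<in> {k0+1..k1}" "t \<in> T"
  shows "(k, \<pi> k t, \<pi> (k - 1) t) \<in> links k0"
  using assms \<pi>_in_Ts by (auto simp: links_def)

lemma links_nonempty: "k0 < k1 \<Longrightarrow> links k0 \<noteq> {}"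
  using chain_link_in_links[of "k0 + 1" k0] T_nonempty by auto

lemma measurable_links:
  assumes "(k, u, v) \<in> links k0"
  shows "X u \<in> borel_measurable M" "X v \<in> borel_measurable M"
  using assms measurable_X_Ts[of k u] measurable_X_Ts[of "k - 1" v] by (auto simp: links_def)

lemma measurable_normalized_link: "l \<in> links k0 \<Longrightarrow> normalized_link l \<in> borel_measurable M"
  using measurable_links[of "fst l" "fst (snd l)" "snd (snd l)" k0]
  by (auto simp: normalized_link_def split: prod.splits)

lemma sum_links_powr_le:
  fixes p :: real
  assumes "1 \<le> p" "p \<le> 2 ^ k0"
  shows "(2 * exp 3) powr p + (\<Sum>l\<in>links k0. (2 * exp 3) powr (p - 2 ^ fst l)) \<le> (3 * exp 3) powr p"
proof -
  have exp3_powr: "exp 3 powr r = exp (3 * r)" for r :: real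
    by (simp add: powr_def mult.commute)
  have "(\<Sum>l\<in>links k0. (2 * exp 3) powr (p - 2 ^ fst l))
      = (\<Sum>k\<in>{k0+1..k1}. \<Sum>_\<in>Ts k \<times> Ts (k - 1). (2 * exp 3) powr (p - 2 ^ k))"
    unfolding links_def by (subst sum.Sigma) (auto intro!: finite_cartesian_product finite_Ts simp: split_def)
  also have "\<dots> = (\<Sum>k\<in>{k0+1..k1}. real (card (Ts k \<times> Ts (k - 1))) * (2 * exp 3) powr (p - 2 ^ k))"
    by simp
  also have "\<dots> \<le> (\<Sum>k\<in>{k0+1..k1}. exp (3 * p) * 2 powr (p - 2 ^ k))"
  proof (intro sum_mono)
    fix k assume k: "k \<in> {k0+1..k1}"
    have "real (card (Ts k \<times> Ts (k - 1))) \<le> exp (2 ^ (k + 1)) * exp (2 ^ k)"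
      using k card_Ts[of k] card_Ts[of "k - 1"]
      by (auto simp: card_cartesian_product intro!: mult_mono)
    also have "\<dots> = exp (3 * 2 ^ k)"
      by (simp flip: exp_add)
    finally have "real (card (Ts k \<times> Ts (k - 1))) * (2 * exp 3) powr (p - 2 ^ k)
        \<le> exp (3 * 2 ^ k) * (2 * exp 3) powr (p - 2 ^ k)"
      by (rule mult_right_mono) simp
    also have "\<dots> = exp (3 * p) * 2 powr (p - 2 ^ k)"
      by (simp add: powr_mult exp3_powr algebra_simps flip: exp_add)
    finally show "real (card (Ts k \<times> Ts (k - 1))) * (2 * exp 3) powr (p - 2 ^ k)
        \<le> exp (3 * p) * 2 powr (p - 2 ^ k)" .
  qed
  also have "\<dots> \<le> exp (3 * p)"
    using sum_two_powr_le_1[OF assms(2), of k1] by (simp flip: sum_distrib_left)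
  finally have "(2 * exp 3) powr p + (\<Sum>l\<in>links k0. (2 * exp 3) powr (p - 2 ^ fst l))
      \<le> exp (3 * p) * (2 powr p + 1)"
    by (simp add: powr_mult exp3_powr algebra_simps)
  also have "\<dots> \<le> exp (3 * p) * 3 powr p"
    using two_powr_plus_one_le_three_powr[OF assms(1)] by simp
  also have "\<dots> = (3 * exp 3) powr p"
    by (simp add: powr_mult exp3_powr)
  finally show ?thesis .
qed

lemma max_level_nonneg:
  assumes "k \<le> k1"
  shows "0 \<le> max_level k x"
proof -
  obtain s where "s \<in> Ts k" using Ts_nonempty[OF assms] by blast
  then have "\<bar>X s x\<bar> \<le> max_level k x"
    unfolding max_level_def using finite_Ts[OF assms] by (intro Max_ge) auto
  then show ?thesis by linarith
qed

lemma normalized_link_nonneg: "0 \<le> normalized_link l x"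
  by (cases l) (simp add: normalized_link_def)

lemma max_normalized_link_nonneg:
  assumes "k0 < k1"
  shows "0 \<le> max_normalized_link k0 x"
proof -
  obtain l where "l \<in> links k0" using links_nonempty[OF assms] by blast
  then have "normalized_link l x \<le> max_normalized_link k0 x"
    unfolding max_normalized_link_def using finite_links by (intro Max_ge) auto
  then show ?thesis using normalized_link_nonneg[of l x] by linarith
qed

lemma measurable_max_level: "k \<le> k1 \<Longrightarrow> max_level k \<in> borel_measurable M"
  unfolding max_level_def using finite_Ts measurable_X_Ts by measurable

lemma measurable_max_normalized_link: "max_normalized_link k0 \<in> borel_measurable M"
  unfolding max_normalized_link_def using finite_links measurable_normalized_link by measurable

lemma nn_integral_max_normalized_link_le:
  fixes p :: real
  assumes "k0 < k1" "1 \<le> p" "p \<le> 2 ^ k0"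
  shows "(\<integral>\<^sup>+x. ennreal (max_normalized_link k0 x powr p) \<partial>M) \<le> ennreal ((3 * exp 3) powr p)"
proof -
  have "(\<integral>\<^sup>+x. ennreal (max_normalized_link k0 x powr p) \<partial>M)
      \<le> ennreal ((2 * exp 3) powr p + (\<Sum>l\<in>links k0. (2 * exp 3) powr (p - 2 ^ fst l)))"
    unfolding max_normalized_link_def
  proof (rule nn_integral_Max_powr_le_threshold[where q = "\<lambda>l. 2 ^ fst l"])
    fix l assume "l \<in> links k0"
    then obtain k u v where l: "l = (k, u, v)" "(k, u, v) \<in> links k0"
      by (cases l) auto
    then show "normalized_link l \<in> borel_measurable M"
      by (simp add: measurable_normalized_link)
    show "(\<integral>\<^sup>+x. ennreal (normalized_link l x powr 2 ^ fst l) \<partial>M) \<le> 1"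
      using nn_integral_normalized_powr_le_1[of "2 ^ k" "\<lambda>x. X u x - X v x" M]
        measurable_links[OF l(2)] by (simp add: l(1) normalized_link_def)
    have "(2::real) ^ k0 \<le> 2 ^ k"
      using l by (auto simp: links_def)
    then show "p \<le> 2 ^ fst l"
      using order.trans[OF assms(3)] l(1) by simp
  qed (use assms finite_links links_nonempty normalized_link_nonneg in auto)
  also have "\<dots> \<le> ennreal ((3 * exp 3) powr p)"
    using sum_links_powr_le assms by (intro ennreal_leI) auto
  finally show ?thesis .
qed

lemma nn_integral_max_level_le:
  fixes p :: real
  assumes "1 \<le> k0" "k0 \<le> k1" "2 ^ (k0 - 1) \<le> p" "M0 \<ge> 0"
    and level: "\<And>s. s \<in> Ts k0 \<Longrightarrow> lpnorm M p (X s) \<le> ennreal M0"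
  shows "(\<integral>\<^sup>+x. ennreal (max_level k0 x powr p) \<partial>M) \<le> ennreal ((3 * exp 3 * M0) powr p)"
proof -
  have "(1::real) \<le> 2 ^ (k0 - 1)" by simp
  then have "p > 0" using assms by linarith
  have "(\<integral>\<^sup>+x. ennreal (max_level k0 x powr p) \<partial>M)
      \<le> (\<Sum>s\<in>Ts k0. \<integral>\<^sup>+x. ennreal (\<bar>X s x\<bar> powr p) \<partial>M)"
    unfolding max_level_def using assms finite_Ts Ts_nonempty measurable_X_Ts
    by (intro nn_integral_Max_powr_le_sum) auto
  also have "\<dots> \<le> (\<Sum>s\<in>Ts k0. ennreal (M0 powr p))"
    using level lpnorm_le_iff[OF \<open>p > 0\<close> \<open>M0 \<ge> 0\<close>] by (intro sum_mono) auto
  also have "\<dots> = ennreal (real (card (Ts k0)) * M0 powr p)"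
    by (simp add: ennreal_mult ennreal_of_nat_eq_real_of_nat)
  also have "\<dots> \<le> ennreal ((3 * exp 3 * M0) powr p)"
  proof (intro ennreal_leI)
    have "(2::real) ^ (k0 + 1) = 4 * 2 ^ (k0 - 1)"
      using assms by (cases k0) auto
    then have "real (card (Ts k0)) \<le> exp (4 * p)"
      using card_Ts[OF \<open>k0 \<le> k1\<close>] assms by (smt (verit) exp_le_cancel_iff)
    also have "\<dots> = exp 4 powr p"
      by (simp add: powr_def mult.commute)
    also have "\<dots> \<le> (3 * exp 3) powr p"
    proof -
      have "exp (4::real) = exp 1 * exp 3" by (simp flip: exp_add)
      also have "\<dots> \<le> 3 * exp 3" using exp_le by simp
      finally show ?thesis using \<open>p > 0\<close> by (intro powr_mono2) auto
    qed
    finally show "real (card (Ts k0)) * M0 powr p \<le> (3 * exp 3 * M0) powr p"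
      by (simp add: powr_mult mult_right_mono)
  qed
  finally show ?thesis .
qed

lemma AE_Max_abs_le:
  assumes "k0 < k1" "A \<ge> 0"
    and increments: "\<And>t. t \<in> T \<Longrightarrow>
      (\<Sum>k\<in>{k0+1..k1}. lpnorm M (2 ^ k) (\<lambda>x. X (\<pi> k t) x - X (\<pi> (k - 1) t) x)) \<le> ennreal A"
  shows "AE x in M. Max ((\<lambda>t. \<bar>X t x\<bar>) ` T) \<le> max_level k0 x + A * max_normalized_link k0 x"
proof -
  define K where "K = {k0+1..k1}"
  define D where "D k t = (\<lambda>x. X (\<pi> k t) x - X (\<pi> (k - 1) t) x)" for k t
  define a where "a k t = enn2real (lpnorm M (2 ^ k) (D k t))" for k t
  have finite_norm: "lpnorm M (2 ^ k) (D k t) \<noteq> \<infinity>" if "k \<in> K" "t \<in> T" for k t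
  proof -
    have "lpnorm M (2 ^ k) (D k t) \<le> (\<Sum>k\<in>K. lpnorm M (2 ^ k) (D k t))"
      using that by (intro member_le_sum) (auto simp: K_def)
    also have "\<dots> \<le> ennreal A"
      using increments[OF that(2)] by (simp add: K_def D_def)
    finally show ?thesis by (auto simp: top_unique)
  qed
  have sum_a: "(\<Sum>k\<in>K. a k t) \<le> A" if "t \<in> T" for t
  proof -
    have "ennreal (\<Sum>k\<in>K. a k t) = (\<Sum>k\<in>K. lpnorm M (2 ^ k) (D k t))"
      using finite_norm that by (simp add: a_def ennreal_enn2real_if flip: sum_ennreal)
    also have "\<dots> \<le> ennreal A"
      using increments[OF that] by (simp add: K_def D_def)
    finally show ?thesis using \<open>A \<ge> 0\<close> by (simp add: ennreal_le_iff)
  qed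
  have "AE x in M. \<forall>k\<in>K. \<forall>t\<in>T. \<bar>D k t x\<bar> \<le> a k t * normalized_link (k, \<pi> k t, \<pi> (k - 1) t) x"
  proof (intro AE_finite_allI finite_T)
    fix k t assume kt: "k \<in> K" "t \<in> T"
    then have "D k t \<in> borel_measurable M"
      using measurable_links[OF chain_link_in_links] by (simp add: D_def K_def)
    then show "AE x in M. \<bar>D k t x\<bar> \<le> a k t * normalized_link (k, \<pi> k t, \<pi> (k - 1) t) x"
      using AE_abs_le_lpnorm_mult_normalized[of "2 ^ k" "D k t" M] finite_norm[OF kt]
      by (simp add: a_def normalized_link_def D_def)
  qed (simp add: K_def)
  then show ?thesis
  proof eventually_elim
    case (elim x)
    have "\<bar>X t x\<bar> \<le> max_level k0 x + A * max_normalized_link k0 x" if t: "t \<in> T" for t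
    proof -
      have "X t x = X (\<pi> k0 t) x + (\<Sum>k\<in>K. D k t x)"
        using sum_atLeastSuc_atMost_diff[of k0 k1 "\<lambda>k. X (\<pi> k t) x"] \<pi>_top[OF t] assms(1)
        by (simp add: K_def D_def)
      then have "\<bar>X t x\<bar> \<le> \<bar>X (\<pi> k0 t) x\<bar> + (\<Sum>k\<in>K. \<bar>D k t x\<bar>)"
        by (metis abs_triangle_ineq add_left_mono order.trans sum_abs)
      also have "\<bar>X (\<pi> k0 t) x\<bar> \<le> max_level k0 x"
        unfolding max_level_def using assms(1) finite_Ts \<pi>_in_Ts t by (intro Max_ge) auto
      also have "(\<Sum>k\<in>K. \<bar>D k t x\<bar>) \<le> (\<Sum>k\<in>K. a k t * max_normalized_link k0 x)"
      proof (intro sum_mono)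
        fix k assume k: "k \<in> K"
        have "normalized_link (k, \<pi> k t, \<pi> (k - 1) t) x \<le> max_normalized_link k0 x"
          unfolding max_normalized_link_def using finite_links chain_link_in_links k t
          by (intro Max_ge) (auto simp: K_def)
        then have "a k t * normalized_link (k, \<pi> k t, \<pi> (k - 1) t) x \<le> a k t * max_normalized_link k0 x"
          by (rule mult_left_mono) (simp add: a_def)
        then show "\<bar>D k t x\<bar> \<le> a k t * max_normalized_link k0 x"
          using elim k t by fastforce
      qed
      also have "\<dots> = (\<Sum>k\<in>K. a k t) * max_normalized_link k0 x"
        by (simp add: sum_distrib_right)
      also have "\<dots> \<le> A * max_normalized_link k0 x"
        using sum_a[OF t] max_normalized_link_nonneg[OF assms(1)] by (rule mult_right_mono)
      finally show ?thesis by simp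
    qed
    then show ?case
      using finite_T T_nonempty by simp
  qed
qed

lemma lpnorm_Max_abs_le:
  fixes p :: real
  assumes "1 \<le> k0" "k0 < k1" "2 ^ (k0 - 1) \<le> p" "p \<le> 2 ^ k0" "A \<ge> 0" "M0 \<ge> 0"
    and increments: "\<And>t. t \<in> T \<Longrightarrow>
      (\<Sum>k\<in>{k0+1..k1}. lpnorm M (2 ^ k) (\<lambda>x. X (\<pi> k t) x - X (\<pi> (k - 1) t) x)) \<le> ennreal A"
    and level: "\<And>s. s \<in> Ts k0 \<Longrightarrow> lpnorm M p (X s) \<le> ennreal M0"
  shows "lpnorm M p (\<lambda>x. Max ((\<lambda>t. \<bar>X t x\<bar>) ` T)) \<le> ennreal (3 * exp 3 * (M0 + A))"
proof -
  define U where "U = max_level k0"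
  define Z where "Z = max_normalized_link k0"
  have "(1::real) \<le> 2 ^ (k0 - 1)" by simp
  then have "1 \<le> p" using assms by linarith
  have U_moment: "(\<integral>\<^sup>+x. ennreal (U x powr p) \<partial>M) \<le> ennreal ((3 * exp 3 * M0) powr p)"
    unfolding U_def using assms by (intro nn_integral_max_level_le) auto
  have "(\<integral>\<^sup>+x. ennreal ((A * Z x) powr p) \<partial>M) = ennreal (A powr p) * (\<integral>\<^sup>+x. ennreal (Z x powr p) \<partial>M)"
    using measurable_max_normalized_link
    by (simp add: Z_def powr_mult ennreal_mult nn_integral_cmult)
  also have "\<dots> \<le> ennreal (A powr p) * ennreal ((3 * exp 3) powr p)"
    unfolding Z_def using nn_integral_max_normalized_link_le assms \<open>1 \<le> p\<close>
    by (intro mult_left_mono) auto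
  also have "\<dots> = ennreal ((3 * exp 3 * A) powr p)"
    by (simp add: powr_mult mult.commute flip: ennreal_mult)
  finally have AZ_moment: "(\<integral>\<^sup>+x. ennreal ((A * Z x) powr p) \<partial>M) \<le> ennreal ((3 * exp 3 * A) powr p)" .
  have "AE x in M. Max ((\<lambda>t. \<bar>X t x\<bar>) ` T) \<le> U x + A * Z x"
    unfolding U_def Z_def using assms(2,5) increments by (rule AE_Max_abs_le)
  then have "(\<integral>\<^sup>+x. ennreal (\<bar>Max ((\<lambda>t. \<bar>X t x\<bar>) ` T)\<bar> powr p) \<partial>M)
      \<le> (\<integral>\<^sup>+x. ennreal ((U x + A * Z x) powr p) \<partial>M)"
  proof (intro nn_integral_mono_AE, eventually_elim)
    case (elim x)
    have "\<bar>X t x\<bar> \<le> Max ((\<lambda>t. \<bar>X t x\<bar>) ` T)" if "t \<in> T" for t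
      using finite_T that by (intro Max_ge) auto
    then have "0 \<le> Max ((\<lambda>t. \<bar>X t x\<bar>) ` T)"
      using T_nonempty by (meson abs_ge_zero all_not_in_conv order.trans)
    then show ?case
      using elim \<open>1 \<le> p\<close> by (auto intro!: ennreal_leI powr_mono2)
  qed
  also have "\<dots> \<le> ennreal ((3 * exp 3 * M0 + 3 * exp 3 * A) powr p)"
    using U_moment AZ_moment \<open>1 \<le> p\<close> assms measurable_max_level measurable_max_normalized_link
      max_level_nonneg max_normalized_link_nonneg
    by (intro nn_integral_powr_add_le) (auto simp: U_def Z_def)
  finally show ?thesis
    using \<open>1 \<le> p\<close> assms by (subst lpnorm_le_iff) (auto simp: distrib_left)
qed

end

theorem proposition6p1:
  fixes M :: "'a measure" and X :: "'i \<Rightarrow> 'a \<Rightarrow> real"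
    and T :: "'i set" and Ts :: "nat \<Rightarrow> 'i set" and \<pi> :: "nat \<Rightarrow> 'i \<Rightarrow> 'i"
    and k1 k0 :: nat and p :: real
  assumes "prob_space M"
    and meas: "\<And>t. t \<in> T \<Longrightarrow> X t \<in> borel_measurable M"
    and "finite T" and "T \<noteq> {}"
    and "k1 \<ge> 2"
    and "\<And>k. k \<le> k1 \<Longrightarrow> Ts k \<subseteq> T"
    and "\<And>k. k \<le> k1 \<Longrightarrow> real (card (Ts k)) \<le> exp (2 ^ (k + 1))"
    and "Ts k1 = T"
    and "\<And>k t. k \<le> k1 \<Longrightarrow> t \<in> T \<Longrightarrow> \<pi> k t \<in> Ts k"
    and "\<And>t. t \<in> T \<Longrightarrow> \<pi> k1 t = t"
    and "1 \<le> k0" and "k0 \<le> k1 - 1"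
    and "2 ^ (k0 - 1) \<le> p" and "p \<le> 2 ^ k0"
  shows "lpnorm M p (\<lambda>\<omega>. Max ((\<lambda>t. \<bar>X t \<omega>\<bar>) ` T))
         \<le> ennreal (3 * exp 3) *
           ((SUP t\<in>T. \<Sum>k\<in>{k0+1..k1}. lpnorm M (2 ^ k) (\<lambda>\<omega>. X (\<pi> k t) \<omega> - X (\<pi> (k - 1) t) \<omega>))
            + (SUP t\<in>Ts k0. lpnorm M p (X t)))"
proof -
  interpret chaining M X T Ts \<pi> k1
    using assms by (intro chaining.intro chaining_axioms.intro) auto
  define S0 where "S0 = (SUP t\<in>T. \<Sum>k\<in>{k0+1..k1}. lpnorm M (2 ^ k) (\<lambda>\<omega>. X (\<pi> k t) \<omega> - X (\<pi> (k - 1) t) \<omega>))"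
  define S1 where "S1 = (SUP t\<in>Ts k0. lpnorm M p (X t))"
  show ?thesis
  proof (cases "S0 = \<infinity> \<or> S1 = \<infinity>")
    case True
    then have "ennreal (3 * exp 3) * (S0 + S1) = \<infinity>"
      by (auto simp: ennreal_mult_eq_top_iff)
    then show ?thesis by (simp add: S0_def S1_def)
  next
    case False
    then have "lpnorm M p (\<lambda>\<omega>. Max ((\<lambda>t. \<bar>X t \<omega>\<bar>) ` T)) \<le> ennreal (3 * exp 3 * (enn2real S1 + enn2real S0))"
      using assms by (intro lpnorm_Max_abs_le) (auto simp: S0_def S1_def ennreal_enn2real_if intro: SUP_upper)
    also have "\<dots> = ennreal (3 * exp 3) * (S0 + S1)"
      using False by (simp add: ennreal_mult less_top add.commute)
    finally show ?thesis by (simp add: S0_def S1_def)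
  qed
qed

end
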